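(* For every integer $m\ge1$ and every $n\ge0$, $$v_{2n+1}(x,m,s,q)=\sum_{k=0}^{n}(-1)^k\begin{bmatrix}2n+1\\2k+1\end{bmatrix}\frac{[2m+2n]!\,[m+2n-2k-1]!}{[m+2n]!\,[2m+2n-2k-1]!}\,\frac{T_{2k+1}(q)\,x^{2k+1}}{(-q^{m+2n-2k};q)_{2k+1}}\,v_{2n-2k}(x,m,s,q).$$
   Context: $q$ is an indeterminate; $[n]=\frac{1-q^n}{1-q}$, $[n]!=[1]\cdots[n]$, $[0]!=1$, $\begin{bmatrix}n\\k\end{bmatrix}=\frac{[n]!}{[k]![n-k]!}$, $(a;q)_n=(1-a)(1-qa)\cdots(1-q^{n-1}a)$, $(a;q)_0=1$. For an integer $m\ge 0$ and indeterminates $x,s$, $$v_n(x,m,s,q)=\sum_{k=0}^{\lfloor n/2\rfloor}(-s)^kq^{k^2}\frac{[n]!}{[k]!\,[n-2k]!}\,\frac{[m+n-k-1]!}{[m+n-1]!}\,\frac{1}{(-q;q)_k\,(-q^{n+m-k};q)_k}\,x^{n-2k}\quad(n\ge1),\qquad v_0=1.$$ With $e_q(z)=\sum_{n\ge0}\frac{z^n}{[n]!}$, the $q$-tangent numbers $T_{2n+1}(q)$ are defined by $\frac{e_q(z)-e_q(-z)}{e_q(z)+e_q(-z)}=\sum_{n\ge0}(-1)^n\frac{T_{2n+1}(q)}{[2n+1]!}z^{2n+1}$ (so $T_1(q)=1$, $T_3(q)=q(1+q)$). *)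

theory Defs
  imports "HOL-Computational_Algebra.Formal_Power_Series"
begin

definition qint :: "'a::field \<Rightarrow> nat \<Rightarrow> 'a" where
  "qint q n = (\<Sum>i<n. q ^ i)"

definition qfact :: "'a::field \<Rightarrow> nat \<Rightarrow> 'a" where
  "qfact q n = (\<Prod>i=1..n. qint q i)"

definition qbinom :: "'a::field \<Rightarrow> nat \<Rightarrow> nat \<Rightarrow> 'a" where
  "qbinom q n k = qfact q n / (qfact q k * qfact q (n - k))"

definition qpoch :: "'a::field \<Rightarrow> 'a \<Rightarrow> nat \<Rightarrow> 'a" where
  "qpoch a q n = (\<Prod>i<n. (1 - q ^ i * a))"

definition vpoly :: "'a::field \<Rightarrow> 'a \<Rightarrow> nat \<Rightarrow> 'a \<Rightarrow> nat \<Rightarrow> 'a" where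
  "vpoly x s m q n =
     (if n = 0 then 1 else
      (\<Sum>k\<le>n div 2. (- s) ^ k * q ^ (k ^ 2)
          * (qfact q n / (qfact q k * qfact q (n - 2 * k)))
          * (qfact q (m + n - k - 1) / qfact q (m + n - 1))
          * (1 / (qpoch (- q) q k * qpoch (- (q ^ (n + m - k))) q k))
          * x ^ (n - 2 * k)))"

definition qexp_fps :: "'a::field \<Rightarrow> 'a fps" where
  "qexp_fps q = Abs_fps (\<lambda>n. 1 / qfact q n)"

definition qexp_neg_fps :: "'a::field \<Rightarrow> 'a fps" where
  "qexp_neg_fps q = Abs_fps (\<lambda>n. (- 1) ^ n / qfact q n)"

definition qtan_fps :: "'a::field \<Rightarrow> 'a fps" where
  "qtan_fps q = (qexp_fps q - qexp_neg_fps q) / (qexp_fps q + qexp_neg_fps q)"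

text \<open>qtangent q n = T_{2n+1}(q).\<close>
definition qtangent :: "'a::field \<Rightarrow> nat \<Rightarrow> 'a" where
  "qtangent q n = (- 1) ^ n * qfact q (2 * n + 1) * fps_nth (qtan_fps q) (2 * n + 1)"

end

theory Submission
  imports Defs
begin

(*
  Write g(n) = [n]! (-q;q)_n = [2][4]...[2n] and normalise
      u_j = v_j g(m+j-1) / ([j]! [2m+j-1]!),     U(z) = sum_j u_j z^j.
  The heart of the proof is that U(z) e_q(-xz) is an even power series.  Expanding u_j
  as a double sum, each odd coefficient of U(z) e_q(-xz) becomes a combination of
  alternating q-differences  D_N h = sum_i (-1)^(N-i) h(i) / ([N-i]! [i]!)  of the weights
  w_a(i) = g(a+i-1)/[2a+i-1]!.  A q-Pascal recurrence for D shows
  [N+2] D_{N+2} w_a = D_N w_(a+1) and D_1 w_a = 0, so D_N w_a = 0 for all odd N.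
  Evenness gives U(z) e_q(-xz) = U(-z) e_q(xz), hence U(z) - U(-z) = tan_q(xz) (U(z) + U(-z)),
  and comparing odd coefficients yields u_(2n+1) = sum_k x^(2k+1) tan_(2k+1) u_(2n-2k),
  which is the theorem after undoing the normalisation.
*)

unbundle fps_syntax

lemma qint_add: "qint q (a + b) = qint q a + q ^ a * qint q b"
  by (induction b) (simp_all add: qint_def algebra_simps power_add)

lemma qint_0 [simp]: "qint q 0 = 0"
  by (simp add: qint_def)

lemma qfact_0 [simp]: "qfact q 0 = 1"
  by (simp add: qfact_def)

lemma qfact_Suc: "qfact q (Suc n) = qfact q n * qint q (Suc n)"
  by (simp add: qfact_def prod.nat_ivl_Suc' mult.commute)

lemma qpoch_add: "qpoch a q (i + k) = qpoch a q i * qpoch (q ^ i * a) q k"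
  by (induction k) (simp_all add: qpoch_def power_add algebra_simps)

text \<open>The q-double factorial $g(n) = [n]!\,(-q;q)_n = [2][4]\cdots[2n]$, the natural
  denominator after normalising $v_n$.\<close>
definition qdfact :: "'a::field \<Rightarrow> nat \<Rightarrow> 'a" where
  "qdfact q n = qfact q n * qpoch (- q) q n"

lemma qdfact_Suc: "qdfact q (Suc n) = qdfact q n * qint q (2 * Suc n)"
proof -
  have "qint q (2 * Suc n) = qint q (Suc n + Suc n)"
    by (simp only: mult_2)
  also have "\<dots> = qint q (Suc n) * (1 + q ^ Suc n)"
    by (simp only: qint_add) (simp add: algebra_simps)
  finally have "qint q (2 * Suc n) = qint q (Suc n) * (1 + q ^ Suc n)" .
  then show ?thesis
    by (simp add: qdfact_def qfact_Suc qpoch_def algebra_simps)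
qed

locale qgeneric =
  fixes q :: "'a::field_char_0"
  assumes qint_ne_0: "\<And>j. j \<ge> 1 \<Longrightarrow> qint q j \<noteq> 0"
    and one_plus_power_nonzero: "\<And>j. j \<ge> 1 \<Longrightarrow> 1 + q ^ j \<noteq> 0"
begin

abbreviation qf :: "nat \<Rightarrow> 'a" where "qf \<equiv> qfact q"

lemma qint_nonzero [simp]: "qint q (Suc n) \<noteq> 0"
  using qint_ne_0 by simp

lemma qfact_nonzero [simp]: "qf n \<noteq> 0"
  by (induction n) (simp_all add: qfact_Suc)

lemma qpoch_neg_power_nonzero: "a \<ge> 1 \<Longrightarrow> qpoch (- (q ^ a)) q k \<noteq> 0"
  using one_plus_power_nonzero by (simp add: qpoch_def power_add[symmetric])

lemma qpoch_neg_q_nonzero [simp]: "qpoch (- q) q k \<noteq> 0"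
  using qpoch_neg_power_nonzero[of 1] by simp

lemma qdfact_nonzero [simp]: "qdfact q n \<noteq> 0"
  by (simp add: qdfact_def)

lemma qdfact_add:
  "qdfact q (a + k) = qdfact q a * (qf (a + k) / qf a) * qpoch (- (q ^ (a + 1))) q k"
proof -
  have shift: "- (q ^ (a + 1)) = q ^ a * - q"
    by simp
  show ?thesis
    unfolding shift qdfact_def qpoch_add by simp
qed


section \<open>Alternating q-differences\<close>

text \<open>$D_N h = \sum_{i\le N} (-1)^{N-i} h(i)/([N-i]!\,[i]!)$, a q-analogue of the $N$-th
  finite difference of $h$ (divided by $N!$).\<close>
definition qdelta :: "(nat \<Rightarrow> 'a) \<Rightarrow> nat \<Rightarrow> 'a" where
  "qdelta h N = (\<Sum>i\<le>N. (-1) ^ (N - i) * h i / (qf (N - i) * qf i))"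

text \<open>q-Pascal recurrence, from $[N+1] = [i] + q^i [N+1-i]$:
  $[N+1]\,D_{N+1} h = D_N\big(i \mapsto h(i+1) - q^i h(i)\big)$.\<close>
lemma qdelta_Suc:
  "qint q (Suc N) * qdelta h (Suc N) = qdelta (\<lambda>i. h (Suc i) - q ^ i * h i) N"
proof -
  define t where "t i = (-1) ^ (Suc N - i) * h i / (qf (Suc N - i) * qf i)" for i
  have lower: "t (Suc i) * qint q (Suc i) = (-1) ^ (N - i) * h (Suc i) / (qf (N - i) * qf i)"
    if "i \<le> N" for i
    using that by (simp add: t_def qfact_Suc field_simps)
  have upper: "t i * (q ^ i * qint q (Suc N - i)) = - ((-1) ^ (N - i) * (q ^ i * h i) / (qf (N - i) * qf i))"
    if "i \<le> N" for i
  proof -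
    have "Suc N - i = Suc (N - i)" using that by simp
    then show ?thesis by (simp add: t_def qfact_Suc field_simps)
  qed
  have "qint q (Suc N) * qdelta h (Suc N) = (\<Sum>i\<le>Suc N. t i * (qint q i + q ^ i * qint q (Suc N - i)))"
    unfolding qdelta_def sum_distrib_left
    by (intro sum.cong refl) (simp add: t_def flip: qint_add)
  also have "\<dots> = (\<Sum>i\<le>Suc N. t i * qint q i) + (\<Sum>i\<le>Suc N. t i * (q ^ i * qint q (Suc N - i)))"
    by (simp add: distrib_left sum.distrib)
  also have "\<dots> = (\<Sum>i\<le>N. t (Suc i) * qint q (Suc i)) + (\<Sum>i\<le>N. t i * (q ^ i * qint q (Suc N - i)))"
    by (subst (1) sum.atMost_Suc_shift) simp
  also have "\<dots> = qdelta (\<lambda>i. h (Suc i) - q ^ i * h i) N"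
    unfolding qdelta_def
    by (simp add: lower upper sum.distrib[symmetric] diff_divide_distrib right_diff_distrib)
  finally show ?thesis .
qed

lemma qdelta_qint_shift: "qdelta (\<lambda>i. qint q i * h i) (Suc N) = qdelta (\<lambda>i. h (Suc i)) N"
proof -
  have "(-1) ^ (N - i) * (qint q (Suc i) * h (Suc i)) / (qf (N - i) * qf (Suc i))
          = (-1) ^ (N - i) * h (Suc i) / (qf (N - i) * qf i)" for i
    by (simp add: qfact_Suc field_simps)
  then show ?thesis
    unfolding qdelta_def by (subst sum.atMost_Suc_shift) simp
qed

definition weight :: "nat \<Rightarrow> nat \<Rightarrow> 'a" where
  "weight a i = qdfact q (a + i - 1) / qf (2 * a + i - 1)"

text \<open>Their q-difference in $i$ carries the factor $[i]$ and is a shifted weight of level $a+1$,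
  because $[2a+2i] = [i] + q^i [2a+i]$.\<close>
lemma weight_q_difference:
  assumes "a \<ge> 1"
  shows "weight a (Suc i) - q ^ i * weight a i = qint q i * (qdfact q (a + i - 1) / qf (2 * a + i))"
proof -
  obtain b where b: "a = Suc b" using assms by (cases a) auto
  have "qint q (2 * Suc (b + i)) = qint q i + q ^ i * qint q (Suc (2 * b + i + 1))"
    using qint_add[of q i "Suc (2 * b + i + 1)"] by (simp add: algebra_simps)
  then show ?thesis
    by (simp add: b weight_def qdfact_Suc qfact_Suc field_simps)
qed

text \<open>One q-Pascal step applied to a weight; followed by the index shift above, it lowers the
  order of the difference by two and raises the level of the weight by one.\<close>
lemma qdelta_weight_Suc:
  assumes "a \<ge> 1"
  shows "qint q (Suc N) * qdelta (weight a) (Suc N)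
           = qdelta (\<lambda>i. qint q i * (qdfact q (a + i - 1) / qf (2 * a + i))) N"
  unfolding qdelta_Suc weight_q_difference[OF assms] ..

lemma qdelta_weight_odd: "a \<ge> 1 \<Longrightarrow> qdelta (weight a) (2 * k + 1) = 0"
proof (induction k arbitrary: a)
  case 0
  have "qint q 1 * qdelta (weight a) 1 = 0"
    using qdelta_weight_Suc[OF 0, of 0] by (simp add: qdelta_def)
  then show ?case by simp
next
  case (Suc k)
  have "qint q (Suc (Suc (2 * k + 1))) * qdelta (weight a) (Suc (Suc (2 * k + 1)))
          = qdelta (\<lambda>i. qint q i * (qdfact q (a + i - 1) / qf (2 * a + i))) (Suc (2 * k + 1))"
    by (rule qdelta_weight_Suc[OF Suc.prems])
  also have "\<dots> = qdelta (weight (Suc a)) (2 * k + 1)"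
    by (simp only: qdelta_qint_shift) (simp add: weight_def[abs_def])
  also have "\<dots> = 0" using Suc.IH by simp
  finally show ?case by (simp add: algebra_simps)
qed

end


section \<open>Even and odd parts of formal power series\<close>

lemma fps_even_reflect:
  fixes P :: "'a::comm_ring_1 fps"
  assumes "\<And>N. odd N \<Longrightarrow> P $ N = 0"
  shows "P oo - fps_X = P"
proof (rule fps_ext)
  fix n :: nat
  show "(P oo - fps_X) $ n = P $ n"
    by (cases "even n") (simp_all add: assms fps_compose_uminus')
qed

text \<open>From $A\,D' = B\,D$ and $T\,(D+D') = D-D'$ with $D+D'$ invertible we get
  $A - B = T\,(A+B)$; this turns evenness of $U(z)e_q(-xz)$ into the tangent relation.\<close>
lemma fps_tangent_relation:
  fixes A B D D' T :: "'a::field fps"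
  assumes cross: "A * D' = B * D" and tan: "T * (D + D') = D - D'" and unit: "(D + D') $ 0 \<noteq> 0"
  shows "A - B = T * (A + B)"
proof -
  have "(A - B) * (D + D') = (A + B) * (D - D')"
    using cross by (simp add: algebra_simps)
  also have "\<dots> = T * (A + B) * (D + D')"
    by (simp add: tan[symmetric] ac_simps)
  finally show ?thesis
    using unit by (metis fps_nonzero_nth mult_right_cancel)
qed

lemma fps_odd_coeff_recurrence:
  fixes F T :: "'a::field_char_0 fps"
  assumes rel: "F - (F oo - fps_X) = T * (F + (F oo - fps_X))"
  shows "F $ (2 * n + 1) = (\<Sum>k\<le>n. T $ (2 * k + 1) * F $ (2 * n - 2 * k))"
proof -
  define c where "c i = T $ i * (F $ (2 * n + 1 - i) + (-1) ^ (2 * n + 1 - i) * F $ (2 * n + 1 - i))" for i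
  have "2 * F $ (2 * n + 1) = (\<Sum>i<2 * Suc n. c i)"
    using arg_cong[OF rel, of "\<lambda>G. G $ (2 * n + 1)"]
    by (simp add: fps_compose_uminus' fps_mult_nth c_def atLeast0AtMost lessThan_Suc_atMost)
  also have "\<dots> = (\<Sum>k<Suc n. c (2 * k) + c (2 * k + 1))"
    using sum.nat_group[of c 2 "Suc n"] by (simp add: mult.commute)
  also have "\<dots> = (\<Sum>k\<le>n. 2 * (T $ (2 * k + 1) * F $ (2 * n - 2 * k)))"
  proof (intro sum.cong)
    fix k assume "k \<in> {..n}"
    then have "odd (2 * n + 1 - 2 * k)" "2 * n + 1 - (2 * k + 1) = 2 * n - 2 * k" by auto
    then show "c (2 * k) + c (2 * k + 1) = 2 * (T $ (2 * k + 1) * F $ (2 * n - 2 * k))"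
      by (simp add: c_def)
  qed (simp add: lessThan_Suc_atMost)
  finally show ?thesis
    by (simp add: sum_distrib_left[symmetric])
qed


lemma sum_even_triangle_swap:
  fixes F :: "nat \<Rightarrow> nat \<Rightarrow> 'a::comm_monoid_add" and N :: nat
  shows "(\<Sum>j\<le>N. \<Sum>k\<le>j div 2. F k (j - 2 * k)) = (\<Sum>k\<le>N div 2. \<Sum>p\<le>N - 2 * k. F k p)"
  unfolding sum.Sigma[OF finite_atMost ballI[OF finite_atMost]]
  by (rule sum.reindex_bij_witness[where i = "\<lambda>(k, p). (2 * k + p, k)" and j = "\<lambda>(j, k). (k, j - 2 * k)"])
     auto


section \<open>The generating function of the normalised $v_n$\<close>

locale vpoly_setting = qgeneric q for q :: "'a::field_char_0" +
  fixes x s :: 'a and m :: nat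
  assumes m_pos: "m \<ge> 1"
begin

definition u :: "nat \<Rightarrow> 'a" where
  "u j = vpoly x s m q j * (qdfact q (m + j - 1) / (qf j * qf (2 * m + j - 1)))"

text \<open>The part of the $k$-th summand of $v_j$ that does not depend on $j$.\<close>
definition G :: "nat \<Rightarrow> 'a" where
  "G k = (- s) ^ k * q ^ (k ^ 2) / qdfact q k"

lemma u_expand:
  "u j = (\<Sum>k\<le>j div 2. G k * (x ^ (j - 2 * k) / qf (j - 2 * k)) * weight (m + k) (j - 2 * k))"
proof (cases "j = 0")
  case True
  then show ?thesis by (simp add: u_def vpoly_def G_def weight_def qdfact_def qpoch_def)
next
  case False
  have summand: "(- s) ^ k * q ^ (k ^ 2) * (qf j / (qf k * qf (j - 2 * k)))
          * (qf (m + j - k - 1) / qf (m + j - 1))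
          * (1 / (qpoch (- q) q k * qpoch (- (q ^ (j + m - k))) q k)) * x ^ (j - 2 * k)
          * (qdfact q (m + j - 1) / (qf j * qf (2 * m + j - 1)))
        = G k * (x ^ (j - 2 * k) / qf (j - 2 * k)) * weight (m + k) (j - 2 * k)"
    if "2 * k \<le> j" for k
  proof -
    define a where "a = m + j - k - 1"
    have idx: "m + j - 1 = a + k" "a + 1 = j + m - k" "m + k + (j - 2 * k) - 1 = a"
      "2 * (m + k) + (j - 2 * k) - 1 = 2 * m + j - 1" "m + j - k - 1 = a"
      using that m_pos by (auto simp: a_def)
    show ?thesis
      unfolding idx(1,3-5) G_def weight_def qdfact_add idx(2)
      using qpoch_neg_power_nonzero[of "j + m - k" k] that m_pos
      by (simp add: qdfact_def field_simps)
  qed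
  show ?thesis
    unfolding u_def vpoly_def if_not_P[OF False] sum_distrib_right
    by (intro sum.cong refl summand) auto
qed

text \<open>The odd coefficients of $U(z)\,e_q(-xz)$ vanish.\<close>
lemma convolution_odd_vanishes:
  assumes "odd N"
  shows "(\<Sum>j\<le>N. u j * ((- x) ^ (N - j) / qf (N - j))) = 0"
proof -
  define F where "F k p = G k * (x ^ p / qf p) * weight (m + k) p
                              * ((- x) ^ (N - 2 * k - p) / qf (N - 2 * k - p))" for k p
  have inner: "(\<Sum>p\<le>N - 2 * k. F k p) = G k * x ^ (N - 2 * k) * qdelta (weight (m + k)) (N - 2 * k)"
    if "2 * k \<le> N" for k
    unfolding qdelta_def sum_distrib_left
  proof (intro sum.cong refl)
    fix p assume "p \<in> {..N - 2 * k}"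
    then have "N - 2 * k = p + (N - 2 * k - p)"
      by simp
    then have "x ^ (N - 2 * k) = x ^ p * x ^ (N - 2 * k - p)"
      by (metis power_add)
    then show "F k p = G k * x ^ (N - 2 * k) * ((- 1) ^ (N - 2 * k - p) * weight (m + k) p
                 / (qf (N - 2 * k - p) * qf p))"
      by (simp add: F_def power_minus[of x] field_simps)
  qed
  have "(\<Sum>j\<le>N. u j * ((- x) ^ (N - j) / qf (N - j))) = (\<Sum>j\<le>N. \<Sum>k\<le>j div 2. F k (j - 2 * k))"
    by (intro sum.cong refl) (auto simp: u_expand sum_distrib_right sum_divide_distrib F_def intro!: sum.cong)
  also have "\<dots> = (\<Sum>k\<le>N div 2. \<Sum>p\<le>N - 2 * k. F k p)"
    by (rule sum_even_triangle_swap)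
  also have "\<dots> = 0"
  proof (rule sum.neutral, rule ballI)
    fix k assume "k \<in> {..N div 2}"
    then have le: "2 * k \<le> N"
      by auto
    then have "odd (N - 2 * k)"
      using assms by auto
    then obtain t where "N - 2 * k = 2 * t + 1"
      by (rule oddE)
    then have "qdelta (weight (m + k)) (N - 2 * k) = 0"
      using qdelta_weight_odd[of "m + k" t] m_pos by simp
    then show "(\<Sum>p\<le>N - 2 * k. F k p) = 0"
      by (simp add: inner[OF le])
  qed
  finally show ?thesis .
qed

definition U :: "'a fps" where "U = Abs_fps u"

abbreviation dilate :: "'a fps \<Rightarrow> 'a fps" where
  "dilate F \<equiv> F oo (fps_const x * fps_X)"

lemma U_cross_relation:
  "U * dilate (qexp_neg_fps q) = (U oo - fps_X) * dilate (qexp_fps q)"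
proof -
  have even: "(U * dilate (qexp_neg_fps q)) oo - fps_X = U * dilate (qexp_neg_fps q)"
  proof (rule fps_even_reflect)
    fix N :: nat assume "odd N"
    have "(U * dilate (qexp_neg_fps q)) $ N = (\<Sum>j\<le>N. u j * ((- x) ^ (N - j) / qf (N - j)))"
      by (simp add: fps_mult_nth atLeast0AtMost U_def qexp_neg_fps_def power_mult_distrib[symmetric])
    then show "(U * dilate (qexp_neg_fps q)) $ N = 0"
      using convolution_odd_vanishes[OF \<open>odd N\<close>] by simp
  qed
  have "dilate (qexp_neg_fps q) oo - fps_X = dilate (qexp_fps q)"
    by (rule fps_ext) (simp add: fps_compose_uminus' qexp_fps_def qexp_neg_fps_def
        power_mult_distrib[symmetric])
  then show ?thesis
    using even by (simp add: fps_compose_mult_distrib)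
qed

lemma qtan_relation: "qtan_fps q * (qexp_fps q + qexp_neg_fps q) = qexp_fps q - qexp_neg_fps q"
proof -
  have "(qexp_fps q + qexp_neg_fps q) $ 0 \<noteq> 0"
    by (simp add: qexp_fps_def qexp_neg_fps_def)
  then show ?thesis
    by (simp add: qtan_fps_def fps_divide_unit mult.assoc inverse_mult_eq_1)
qed

lemma u_odd_recurrence:
  "u (2 * n + 1) = (\<Sum>k\<le>n. x ^ (2 * k + 1) * qtan_fps q $ (2 * k + 1) * u (2 * n - 2 * k))"
proof -
  have tan: "dilate (qtan_fps q) * (dilate (qexp_fps q) + dilate (qexp_neg_fps q))
               = dilate (qexp_fps q) - dilate (qexp_neg_fps q)"
    using arg_cong[OF qtan_relation, of dilate]
    by (simp add: fps_compose_mult_distrib fps_compose_add_distrib fps_compose_sub_distrib)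
  have "U - (U oo - fps_X) = dilate (qtan_fps q) * (U + (U oo - fps_X))"
    by (rule fps_tangent_relation[OF U_cross_relation tan])
       (simp add: qexp_fps_def qexp_neg_fps_def)
  from fps_odd_coeff_recurrence[OF this, of n] show ?thesis
    by (simp add: U_def)
qed

lemma summand_denormalise:
  assumes k: "k \<le> n"
  defines "Fac \<equiv> qf (2 * n + 1) * qf (2 * m + 2 * n) / qdfact q (m + 2 * n)"
  shows "Fac * (x ^ (2 * k + 1) * qtan_fps q $ (2 * k + 1) * u (2 * n - 2 * k))
    = (- 1) ^ k * qbinom q (2 * n + 1) (2 * k + 1)
        * ((qfact q (2 * m + 2 * n) * qfact q (m + 2 * n - 2 * k - 1))
           / (qfact q (m + 2 * n) * qfact q (2 * m + 2 * n - 2 * k - 1)))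
        * ((qtangent q k * x ^ (2 * k + 1)) / qpoch (- (q ^ (m + 2 * n - 2 * k))) q (2 * k + 1))
        * vpoly x s m q (2 * n - 2 * k)"
proof -
  define a where "a = m + 2 * n - 2 * k - 1"
  have idx: "m + 2 * n = a + (2 * k + 1)" "a + 1 = m + 2 * n - 2 * k" "m + (2 * n - 2 * k) - 1 = a"
    "2 * m + (2 * n - 2 * k) - 1 = 2 * m + 2 * n - 2 * k - 1" "2 * n + 1 - (2 * k + 1) = 2 * n - 2 * k"
    using k m_pos by (auto simp: a_def)
  have sign: "(-1::'a) ^ k * (-1) ^ k = 1"
    by (simp flip: power_mult_distrib)
  show ?thesis
    unfolding Fac_def qtangent_def qbinom_def u_def idx(1,3-5) qdfact_add idx(2) a_def[symmetric]
    using qpoch_neg_power_nonzero[of "m + 2 * n - 2 * k" "2 * k + 1"] sign m_pos k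
    by (simp add: field_simps)
qed

end


theorem mainTheorem19:
  fixes x s q :: "'a::field_char_0" and m n :: nat
  assumes "m \<ge> 1"
    and "\<And>j. j \<ge> 1 \<Longrightarrow> qint q j \<noteq> 0"
    and "\<And>j. j \<ge> 1 \<Longrightarrow> 1 + q ^ j \<noteq> 0"
  shows "vpoly x s m q (2 * n + 1) =
    (\<Sum>k\<le>n. (- 1) ^ k * qbinom q (2 * n + 1) (2 * k + 1)
        * ((qfact q (2 * m + 2 * n) * qfact q (m + 2 * n - 2 * k - 1))
           / (qfact q (m + 2 * n) * qfact q (2 * m + 2 * n - 2 * k - 1)))
        * ((qtangent q k * x ^ (2 * k + 1)) / qpoch (- (q ^ (m + 2 * n - 2 * k))) q (2 * k + 1))
        * vpoly x s m q (2 * n - 2 * k))"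
proof -
  interpret vpoly_setting q x s m
    by unfold_locales (use assms in auto)
  define Fac where "Fac = qf (2 * n + 1) * qf (2 * m + 2 * n) / qdfact q (m + 2 * n)"
  have "vpoly x s m q (2 * n + 1) = Fac * u (2 * n + 1)"
    by (simp add: Fac_def u_def)
  also have "\<dots> = (\<Sum>k\<le>n. Fac * (x ^ (2 * k + 1) * qtan_fps q $ (2 * k + 1) * u (2 * n - 2 * k)))"
    by (simp only: u_odd_recurrence sum_distrib_left)
  also have "\<dots> = (\<Sum>k\<le>n. (- 1) ^ k * qbinom q (2 * n + 1) (2 * k + 1)
        * ((qfact q (2 * m + 2 * n) * qfact q (m + 2 * n - 2 * k - 1))
           / (qfact q (m + 2 * n) * qfact q (2 * m + 2 * n - 2 * k - 1)))
        * ((qtangent q k * x ^ (2 * k + 1)) / qpoch (- (q ^ (m + 2 * n - 2 * k))) q (2 * k + 1))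
        * vpoly x s m q (2 * n - 2 * k))"
    unfolding Fac_def by (intro sum.cong refl summand_denormalise) simp
  finally show ?thesis .
qed

end
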